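(* Let $0\le\alpha<1$, $\mu\le\mu(\alpha)=\frac{(1-\alpha)^2}{4}$, $a_1,a_2\in\mathbb{R}$, and let $\alpha_1,\alpha_2$ be the eigenvalues of $A=\begin{pmatrix}0&a_1\\1&a_2\end{pmatrix}$ (labelled as in the context). Assume $$\lambda_{\alpha,\mu,n}-\lambda_{\alpha,\mu,l}\neq\alpha_1-\alpha_2\quad\text{for all }n,l\in\mathbb{N}^*,\ n\neq l.$$ Then the family $\{\lambda_{\alpha,\mu,n}+\alpha_2-\alpha_1:n\ge1\}\cup\{\lambda_{\alpha,\mu,n}:n\ge1\}$, arranged as a sequence $(\Lambda_n)_{n\ge1}$, satisfies, for some $\delta,\rho>0$: $\Re(\Lambda_n)\ge\delta|\Lambda_n|$ and $|\Lambda_n-\Lambda_m|\ge\rho|n-m|$ for all $n,m\ge1$, and $\sum_{n\ge1}\frac{1}{|\Lambda_n|}<+\infty$.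
   Context: $\nu(\alpha,\mu)=\frac{2}{2-\alpha}\sqrt{\mu(\alpha)-\mu}$, $(j_{\nu,n})_{n\ge1}$ is the increasing sequence of positive zeros of the Bessel function $J_\nu$, and $\lambda_{\alpha,\mu,n}=\left(\frac{2-\alpha}{2}\right)^2 j_{\nu(\alpha,\mu),n}^2$. Labelling of eigenvalues of $A$: if $a_2^2+4a_1>0$, $\alpha_1=\frac12(a_2-\sqrt{a_2^2+4a_1})$, $\alpha_2=\frac12(a_2+\sqrt{a_2^2+4a_1})$; if $a_2^2+4a_1<0$, $\alpha_1=\frac12(a_2+i\sqrt{-(a_2^2+4a_1)})$, $\alpha_2=\frac12(a_2-i\sqrt{-(a_2^2+4a_1)})$; if $a_2^2+4a_1=0$, $\alpha_1=\alpha_2=a_2/2$. *)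

theory Defs
  imports "HOL-Analysis.Analysis"
begin

text \<open>Bessel function of the first kind of real order nu (used for nu \<ge> 0, x > 0),
  defined by its power series.\<close>
definition besselJ :: "real \<Rightarrow> real \<Rightarrow> real" where
  "besselJ \<nu> x = (\<Sum>k. (-1) ^ k / (fact k * Gamma (real k + \<nu> + 1)) * (x / 2) powr (2 * real k + \<nu>))"

text \<open>The n-th (n \<ge> 1) positive zero of J_nu, in increasing order: the positive zero
  below which there are exactly n - 1 positive zeros.\<close>
definition bessel_zero :: "real \<Rightarrow> nat \<Rightarrow> real" where
  "bessel_zero \<nu> n = (THE x. 0 < x \<and> besselJ \<nu> x = 0 \<and>
      card {y. 0 < y \<and> y < x \<and> besselJ \<nu> y = 0} = n - 1)"

definition mu_crit :: "real \<Rightarrow> real" where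
  "mu_crit \<alpha> = (1 - \<alpha>)^2 / 4"

definition nu_am :: "real \<Rightarrow> real \<Rightarrow> real" where
  "nu_am \<alpha> \<mu> = 2 / (2 - \<alpha>) * sqrt (mu_crit \<alpha> - \<mu>)"

definition lam :: "real \<Rightarrow> real \<Rightarrow> nat \<Rightarrow> real" where
  "lam \<alpha> \<mu> n = ((2 - \<alpha>) / 2)^2 * (bessel_zero (nu_am \<alpha> \<mu>) n)^2"

text \<open>Eigenvalues of A = [[0, a1], [1, a2]], labelled as in the paper.\<close>
definition eig1 :: "real \<Rightarrow> real \<Rightarrow> complex" where
  "eig1 a1 a2 =
     (if a2^2 + 4*a1 > 0 then complex_of_real ((a2 - sqrt (a2^2 + 4*a1)) / 2)
      else if a2^2 + 4*a1 < 0 then Complex (a2/2) (sqrt (-(a2^2 + 4*a1)) / 2)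
      else complex_of_real (a2/2))"

definition eig2 :: "real \<Rightarrow> real \<Rightarrow> complex" where
  "eig2 a1 a2 =
     (if a2^2 + 4*a1 > 0 then complex_of_real ((a2 + sqrt (a2^2 + 4*a1)) / 2)
      else if a2^2 + 4*a1 < 0 then Complex (a2/2) (- sqrt (-(a2^2 + 4*a1)) / 2)
      else complex_of_real (a2/2))"

definition Lambda_set :: "real \<Rightarrow> real \<Rightarrow> real \<Rightarrow> real \<Rightarrow> complex set" where
  "Lambda_set \<alpha> \<mu> a1 a2 =
     {complex_of_real (lam \<alpha> \<mu> n) + eig2 a1 a2 - eig1 a1 a2 | n. n \<ge> 1}
     \<union> {complex_of_real (lam \<alpha> \<mu> n) | n. n \<ge> 1}"

end

(*
  Write J_nu(x) = (x/2)^nu g(x^2/4) with g an entire power series. The positive zeros j_n of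
  J_nu are then the zeros of u(x) = x^(nu + 1/2) g(x^2/4), which solves
  u'' + (1 - (nu^2 - 1/4) / x^2) u = 0. Analyticity of g makes the zeros locally finite, and
  Sturm comparison with sin (k x) shows that they are unbounded and that consecutive zeros are
  at least some d > 0 apart. Hence lambda_n = ((2 - alpha)/2)^2 j_n^2 satisfies
  lambda_(n+1) - lambda_n >= c n: it grows quadratically and is uniformly separated.

  The difference alpha_2 - alpha_1 is either a real sigma >= 0 or purely imaginary. In the
  real case the set {lambda_n} u {lambda_n + sigma} is enumerated increasingly; it is uniformly
  separated because beyond finitely many indices the gaps of lambda exceed sigma + 1. In the
  imaginary case the two copies are interleaved. Either way the n-th term has modulus of
  order n^2, which gives the sector condition and the summability of the inverses.
*)

theory Submission
  imports Defs "HOL-Complex_Analysis.Conformal_Mappings"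
begin

section \<open>The power series of \<open>J\<^sub>\<nu>\<close> and Bessel's equation\<close>

definition bessel_coeff :: "real \<Rightarrow> nat \<Rightarrow> real" where
  "bessel_coeff \<nu> k = (-1)^k / (fact k * Gamma (real k + \<nu> + 1))"

lemma Gamma_Suc_shift:
  assumes "\<nu> \<ge> 0"
  shows "Gamma (real (Suc k) + \<nu> + 1) = (real k + \<nu> + 1) * Gamma (real k + \<nu> + 1)"
proof -
  have "real k + \<nu> + 1 \<notin> \<int>\<^sub>\<le>\<^sub>0" using assms nonpos_Ints_nonpos by force
  from Gamma_plus1[OF this] show ?thesis by (simp add: algebra_simps)
qed

lemma Gamma_shift_ge:
  assumes "\<nu> \<ge> 0" shows "Gamma (\<nu> + 1) \<le> Gamma (real k + \<nu> + 1)"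
proof (induction k)
  case (Suc k)
  have "0 < Gamma (real k + \<nu> + 1)" using assms by simp
  then have "1 * Gamma (real k + \<nu> + 1) \<le> (real k + \<nu> + 1) * Gamma (real k + \<nu> + 1)"
    using assms by (intro mult_right_mono) auto
  then show ?case using Suc Gamma_Suc_shift[OF assms, of k] by linarith
qed simp

lemma bessel_coeff_Suc:
  assumes "\<nu> \<ge> 0"
  shows "bessel_coeff \<nu> (Suc k) * (real k + 1) * (real k + \<nu> + 1) = - bessel_coeff \<nu> k"
proof -
  have "bessel_coeff \<nu> (Suc k) = - bessel_coeff \<nu> k / ((real k + 1) * (real k + \<nu> + 1))"
    unfolding bessel_coeff_def Gamma_Suc_shift[OF assms] fact_Suc by (simp add: field_simps)
  moreover have "real k + \<nu> + 1 > 0" using assms by auto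
  ultimately show ?thesis by simp
qed

lemma summable_bessel_coeff:
  fixes z :: "'a::{real_normed_field,banach}"
  assumes "\<nu> \<ge> 0" shows "summable (\<lambda>k. of_real (bessel_coeff \<nu> k) * z ^ k)"
proof (rule summable_norm_cancel, rule summable_comparison_test')
  show "summable (\<lambda>k. inverse (Gamma (\<nu> + 1)) / fact k * norm z ^ k)"
    using summable_mult[OF summable_exp[of "norm z"], of "inverse (Gamma (\<nu> + 1))"]
    by (simp add: field_simps)
  fix k
  have "\<bar>bessel_coeff \<nu> k\<bar> \<le> inverse (Gamma (\<nu> + 1)) / fact k"
    using Gamma_shift_ge[OF assms, of k] assms
    by (simp add: bessel_coeff_def abs_mult field_simps frac_le)
  then have "\<bar>bessel_coeff \<nu> k\<bar> * norm z ^ k \<le> inverse (Gamma (\<nu> + 1)) / fact k * norm z ^ k"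
    by (rule mult_right_mono) simp_all
  then show "norm (norm (of_real (bessel_coeff \<nu> k) * z ^ k))
      \<le> inverse (Gamma (\<nu> + 1)) / fact k * norm z ^ k"
    by (simp add: norm_mult norm_power)
qed

definition bessel_g :: "real \<Rightarrow> real \<Rightarrow> real" where
  "bessel_g \<nu> y = (\<Sum>k. bessel_coeff \<nu> k * y ^ k)"

definition bessel_g' :: "real \<Rightarrow> real \<Rightarrow> real" where
  "bessel_g' \<nu> y = (\<Sum>k. diffs (bessel_coeff \<nu>) k * y ^ k)"

definition bessel_g'' :: "real \<Rightarrow> real \<Rightarrow> real" where
  "bessel_g'' \<nu> y = (\<Sum>k. diffs (diffs (bessel_coeff \<nu>)) k * y ^ k)"

lemma summable_bessel_coeff_real:
  assumes "\<nu> \<ge> 0" shows "summable (\<lambda>k. bessel_coeff \<nu> k * (y::real) ^ k)"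
  using summable_bessel_coeff[OF assms, of y] by simp

lemma summable_bessel_diffs:
  assumes "\<nu> \<ge> 0"
  shows "summable (\<lambda>k. diffs (bessel_coeff \<nu>) k * (y::real) ^ k)"
    and "summable (\<lambda>k. diffs (diffs (bessel_coeff \<nu>)) k * (y::real) ^ k)"
  using summable_bessel_coeff_real[OF assms]
  by (intro termdiff_converges_all; assumption)+

lemma bessel_g_deriv:
  assumes "\<nu> \<ge> 0"
  shows "(bessel_g \<nu> has_real_derivative bessel_g' \<nu> y) (at y)"
    and "(bessel_g' \<nu> has_real_derivative bessel_g'' \<nu> y) (at y)"
  unfolding bessel_g_def [abs_def] bessel_g'_def [abs_def] bessel_g''_def
  using termdiffs_strong_converges_everywhere summable_bessel_coeff_real[OF assms]
    summable_bessel_diffs(1)[OF assms] by blast+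

lemma bessel_g_ode:
  assumes "\<nu> \<ge> 0"
  shows "y * bessel_g'' \<nu> y + (\<nu> + 1) * bessel_g' \<nu> y + bessel_g \<nu> y = 0"
proof -
  define c where "c = bessel_coeff \<nu>"
  have "(\<lambda>n. y * (diffs (diffs c) n * y ^ n)) sums (y * bessel_g'' \<nu> y)"
    using sums_mult[OF summable_sums[OF summable_bessel_diffs(2)[OF assms]]]
    by (simp add: bessel_g''_def c_def)
  then have "(\<lambda>n. real (Suc n) * diffs c (Suc n) * y ^ Suc n) sums (y * bessel_g'' \<nu> y)"
    by (simp add: diffs_def algebra_simps)
  then have "(\<lambda>m. real m * diffs c m * y ^ m) sums (y * bessel_g'' \<nu> y)"
    by (rule sums_Suc_imp [rotated]) simp
  moreover have "(\<lambda>m. (\<nu> + 1) * (diffs c m * y ^ m)) sums ((\<nu> + 1) * bessel_g' \<nu> y)"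
    using sums_mult[OF summable_sums[OF summable_bessel_diffs(1)[OF assms]]]
    by (simp add: bessel_g'_def c_def)
  moreover have "(\<lambda>m. c m * y ^ m) sums (bessel_g \<nu> y)"
    using summable_sums[OF summable_bessel_coeff_real[OF assms]] by (simp add: bessel_g_def c_def)
  ultimately have "(\<lambda>m. real m * diffs c m * y ^ m + (\<nu> + 1) * (diffs c m * y ^ m) + c m * y ^ m)
      sums (y * bessel_g'' \<nu> y + (\<nu> + 1) * bessel_g' \<nu> y + bessel_g \<nu> y)"
    by (intro sums_add)
  moreover have "real m * diffs c m + (\<nu> + 1) * diffs c m + c m = 0" for m
    using bessel_coeff_Suc[OF assms, of m] by (simp add: diffs_def c_def algebra_simps)
  then have "real m * diffs c m * y ^ m + (\<nu> + 1) * (diffs c m * y ^ m) + c m * y ^ m = 0" for m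
    by (metis distrib_right mult.assoc mult_zero_left)
  ultimately show ?thesis using sums_unique sums_0 by fastforce
qed

lemma besselJ_eq_bessel_g:
  assumes "\<nu> \<ge> 0" "x > 0"
  shows "besselJ \<nu> x = (x/2) powr \<nu> * bessel_g \<nu> (x^2/4)"
proof -
  have "(x/2) powr (2 * real k + \<nu>) = (x/2) powr \<nu> * (x^2/4) ^ k" for k
  proof -
    have "(x/2) powr (2 * real k) = (x/2) ^ (2 * k)"
      using powr_realpow[of "x/2" "2 * k"] assms(2) by simp
    also have "\<dots> = (x^2/4) ^ k" by (simp add: power_mult power_divide)
    finally show ?thesis by (simp add: powr_add)
  qed
  then have "besselJ \<nu> x = (\<Sum>k. (x/2) powr \<nu> * (bessel_coeff \<nu> k * (x^2/4) ^ k))"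
    unfolding besselJ_def bessel_coeff_def by (simp add: ac_simps)
  also have "\<dots> = (x/2) powr \<nu> * bessel_g \<nu> (x^2/4)"
    unfolding bessel_g_def by (rule suminf_mult[OF summable_bessel_coeff_real[OF assms(1)]])
  finally show ?thesis .
qed

text \<open>The Liouville normal form of Bessel's equation: \<open>u(x) = 2\<^sup>\<nu> \<surd>x J\<^sub>\<nu>(x)\<close>
  satisfies \<open>u'' + Q u = 0\<close>.\<close>

definition bessel_Q :: "real \<Rightarrow> real \<Rightarrow> real" where
  "bessel_Q \<nu> x = 1 - (\<nu>^2 - 1/4) / x^2"

definition bessel_u :: "real \<Rightarrow> real \<Rightarrow> real" where
  "bessel_u \<nu> x = x powr (\<nu> + 1/2) * bessel_g \<nu> (x^2/4)"

definition bessel_u' :: "real \<Rightarrow> real \<Rightarrow> real" where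
  "bessel_u' \<nu> x = (\<nu> + 1/2) * x powr (\<nu> - 1/2) * bessel_g \<nu> (x^2/4)
     + x powr (\<nu> + 1/2) * (bessel_g' \<nu> (x^2/4) * (x/2))"

lemma bessel_Q_less:
  assumes "\<nu> \<ge> 0" "0 < x\<^sub>0" "x\<^sub>0 \<le> x"
  shows "bessel_Q \<nu> x < 1 + 1 / x\<^sub>0^2"
proof -
  have "0 < x" using assms by linarith
  then have "- ((\<nu>^2 - 1/4) / x^2) \<le> 1 / (4 * x^2)" "1 / (4 * x^2) < 1 / x^2"
    using assms(1) by (simp_all add: field_simps)
  moreover have "1 / x^2 \<le> 1 / x\<^sub>0^2" using assms(2,3) by (simp add: frac_le power_mono)
  ultimately show ?thesis by (simp add: bessel_Q_def)
qed

lemma bessel_u_eq_0_iff: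
  assumes "\<nu> \<ge> 0" "x > 0"
  shows "bessel_u \<nu> x = 0 \<longleftrightarrow> besselJ \<nu> x = 0"
  using assms by (simp add: bessel_u_def besselJ_eq_bessel_g)

lemma bessel_g_square_deriv:
  assumes "\<nu> \<ge> 0"
  shows "((\<lambda>x. bessel_g \<nu> (x^2/4)) has_real_derivative bessel_g' \<nu> (x^2/4) * (x/2)) (at x)"
    and "((\<lambda>x. bessel_g' \<nu> (x^2/4)) has_real_derivative bessel_g'' \<nu> (x^2/4) * (x/2)) (at x)"
proof -
  have sq: "((\<lambda>x. x^2/4) has_real_derivative x/2) (at x)"
    by (auto intro!: derivative_eq_intros)
  show "((\<lambda>x. bessel_g \<nu> (x^2/4)) has_real_derivative bessel_g' \<nu> (x^2/4) * (x/2)) (at x)"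
    using DERIV_chain2[OF bessel_g_deriv(1)[OF assms] sq] .
  show "((\<lambda>x. bessel_g' \<nu> (x^2/4)) has_real_derivative bessel_g'' \<nu> (x^2/4) * (x/2)) (at x)"
    using DERIV_chain2[OF bessel_g_deriv(2)[OF assms] sq] .
qed

lemma bessel_u_deriv:
  assumes "\<nu> \<ge> 0" "x > 0"
  shows "(bessel_u \<nu> has_real_derivative bessel_u' \<nu> x) (at x)"
  unfolding bessel_u_def [abs_def] bessel_u'_def
  by (rule derivative_eq_intros has_real_derivative_powr[OF assms(2)]
      bessel_g_square_deriv[OF assms(1)] refl | simp)+

lemma bessel_u'_deriv:
  assumes "\<nu> \<ge> 0" "x > 0"
  shows "(bessel_u' \<nu> has_real_derivative - (bessel_Q \<nu> x * bessel_u \<nu> x)) (at x)"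
proof -
  define p where "p = \<nu> + 1/2"
  define y where "y = x^2/4"
  have D: "(bessel_u' \<nu> has_real_derivative
      p * ((p - 1) * x powr (p - 1 - 1)) * bessel_g \<nu> y + p * x powr (p - 1) * (bessel_g' \<nu> y * (x/2))
       + (p * x powr (p - 1) * (bessel_g' \<nu> y * (x/2))
          + x powr p * (bessel_g'' \<nu> y * (x/2) * (x/2) + bessel_g' \<nu> y * (1/2)))) (at x)"
    unfolding bessel_u'_def [abs_def] y_def
    by (rule derivative_eq_intros has_real_derivative_powr[OF assms(2)]
        bessel_g_square_deriv[OF assms(1)] refl | simp add: p_def assms(2))+
  have powr_p: "x powr (p - 1) = x powr p / x" "x powr (p - 1 - 1) = x powr p / x^2"
    using assms by (simp_all add: powr_diff power2_eq_square)
  have half_sq: "x/2 * (x/2) = y" by (simp add: y_def power2_eq_square)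
  have "p * ((p - 1) * x powr (p - 1 - 1)) * bessel_g \<nu> y
       + p * x powr (p - 1) * (bessel_g' \<nu> y * (x/2))
       + (p * x powr (p - 1) * (bessel_g' \<nu> y * (x/2))
          + x powr p * (bessel_g'' \<nu> y * (x/2) * (x/2) + bessel_g' \<nu> y * (1/2)))
     = p * (p - 1) / x^2 * x powr p * bessel_g \<nu> y + p * x powr p * bessel_g' \<nu> y
       + x powr p * (y * bessel_g'' \<nu> y + bessel_g' \<nu> y * (1/2))"
    unfolding powr_p using assms by (simp add: field_simps power2_eq_square flip: half_sq)
  also have "y * bessel_g'' \<nu> y = - ((\<nu> + 1) * bessel_g' \<nu> y) - bessel_g \<nu> y"
    using bessel_g_ode[OF assms(1), of y] by linarith
  also have "p * (p - 1) / x^2 * x powr p * bessel_g \<nu> y + p * x powr p * bessel_g' \<nu> y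
       + x powr p * (- ((\<nu> + 1) * bessel_g' \<nu> y) - bessel_g \<nu> y + bessel_g' \<nu> y * (1/2))
     = - (bessel_Q \<nu> x * bessel_u \<nu> x)"
    unfolding bessel_Q_def bessel_u_def p_def y_def using assms
    by (simp add: field_simps power2_eq_square)
  finally show ?thesis using D by simp
qed

lemma finite_besselJ_zeros_le:
  assumes "\<nu> \<ge> 0"
  shows "finite {x. 0 < x \<and> x \<le> d \<and> besselJ \<nu> x = 0}"
proof (rule ccontr)
  define G where "G z = (\<Sum>k. of_real (bessel_coeff \<nu> k) * z ^ k)" for z :: complex
  define Z where "Z = {x. 0 < x \<and> x \<le> d \<and> besselJ \<nu> x = 0}"
  assume "infinite {x. 0 < x \<and> x \<le> d \<and> besselJ \<nu> x = 0}"
  then have "infinite (of_real ` Z :: complex set)"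
    unfolding Z_def by (subst finite_image_iff) (auto simp: inj_on_def)
  moreover have "bounded (of_real ` Z :: complex set)"
    by (rule bounded_subset[OF bounded_cball[of 0 "\<bar>d\<bar>"]]) (auto simp: Z_def)
  ultimately obtain \<xi> where \<xi>: "\<xi> islimpt (of_real ` Z :: complex set)"
    using bounded_infinite_imp_islimpt by blast
  have "G field_differentiable (at z)" for z
    unfolding G_def [abs_def] field_differentiable_def
    using termdiffs_strong_converges_everywhere[OF summable_bessel_coeff[OF assms]] by blast
  then have "G holomorphic_on UNIV"
    by (simp add: holomorphic_on_def field_differentiable_at_within)
  then have "(G \<circ> (\<lambda>z. z^2/4)) holomorphic_on UNIV"
    by (rule holomorphic_on_compose_gen[rotated]) (auto intro!: holomorphic_intros)
  then have holo: "(\<lambda>z. G (z^2/4)) holomorphic_on UNIV" by (simp add: o_def)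
  have zero: "G (z^2/4) = 0" if z: "z \<in> of_real ` Z" for z
  proof -
    obtain x where x: "x \<in> Z" "z = of_real x" using z by blast
    then have "bessel_g \<nu> (x^2/4) = 0"
      using besselJ_eq_bessel_g[OF assms] by (auto simp: Z_def)
    moreover have "G (of_real (x^2/4)) = of_real (bessel_g \<nu> (x^2/4))"
      unfolding G_def bessel_g_def
      by (simp add: suminf_of_real[OF summable_bessel_coeff_real[OF assms]])
    ultimately show ?thesis using x(2) by simp
  qed
  have "G ((0::complex)^2/4) = 0"
    by (rule analytic_continuation[OF holo open_UNIV connected_UNIV subset_UNIV UNIV_I \<xi> zero UNIV_I])
  moreover have "G 0 = of_real (bessel_coeff \<nu> 0)"
    unfolding G_def by (rule powser_zero)
  moreover have "Gamma (\<nu> + 1) > 0" using assms by simp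
  then have "bessel_coeff \<nu> 0 \<noteq> 0" by (simp add: bessel_coeff_def)
  ultimately show False by simp
qed

section \<open>Sturm comparison\<close>

lemma continuous_on_nonzero_sign:
  fixes u :: "real \<Rightarrow> real"
  assumes "continuous_on S u" "connected S" "\<And>x. x \<in> S \<Longrightarrow> u x \<noteq> 0"
  shows "(\<forall>x\<in>S. u x > 0) \<or> (\<forall>x\<in>S. u x < 0)"
proof (rule ccontr)
  assume "\<not> ?thesis"
  then obtain x y where "x \<in> S" "y \<in> S" "u x < 0" "u y > 0"
    using assms(3) by (meson linorder_neqE_linordered_idom)
  moreover have "connected (u ` S)" using assms(1,2) by (rule connected_continuous_image)
  ultimately have "0 \<in> u ` S"
    unfolding connected_iff_interval by (meson imageI less_imp_le)
  then show False using assms(3) by force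
qed

lemma sturm_wronskian_deriv:
  fixes u u' Q :: "real \<Rightarrow> real"
  assumes "(u has_real_derivative u' x) (at x)" "(u' has_real_derivative - (Q x * u x)) (at x)"
  shows "((\<lambda>x. u' x * sin (k * (x - a)) - u x * (k * cos (k * (x - a))))
           has_real_derivative (k^2 - Q x) * u x * sin (k * (x - a))) (at x)"
proof -
  have "((\<lambda>x. u' x * sin (k * (x - a)) - u x * (k * cos (k * (x - a)))) has_real_derivative
      - (Q x * u x) * sin (k * (x - a)) + u' x * (cos (k * (x - a)) * k)
        - (u' x * (k * cos (k * (x - a))) + u x * (k * (- sin (k * (x - a)) * k)))) (at x)"
    by (rule derivative_eq_intros assms refl | simp)+
  then show ?thesis by (simp add: algebra_simps power2_eq_square)
qed

lemma sturm_zeros_gap_pos: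
  fixes u u' Q :: "real \<Rightarrow> real"
  assumes ab: "a < b" and M: "M > 0"
    and u: "\<And>x. a \<le> x \<Longrightarrow> x \<le> b \<Longrightarrow> (u has_real_derivative u' x) (at x)"
    and u': "\<And>x. a \<le> x \<Longrightarrow> x \<le> b \<Longrightarrow> (u' has_real_derivative - (Q x * u x)) (at x)"
    and ua: "u a = 0" and ub: "u b = 0" and pos: "\<And>x. a < x \<Longrightarrow> x < b \<Longrightarrow> u x > 0"
    and QM: "\<And>x. a \<le> x \<Longrightarrow> x \<le> b \<Longrightarrow> Q x < M"
  shows "pi / sqrt M \<le> b - a"
proof (rule ccontr)
  define k where "k = sqrt M"
  define W where "W x = u' x * sin (k * (x - a)) - u x * (k * cos (k * (x - a)))" for x
  \<comment> \<open>If \<open>b - a < pi / k\<close>, the Wronskian \<open>W\<close> of \<open>u\<close> and \<open>sin (k (x - a))\<close> increases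
    from \<open>W a = 0\<close>, but \<open>W b = u' b sin (k (b - a)) \<le> 0\<close>.\<close>
  assume "\<not> pi / sqrt M \<le> b - a"
  then have k: "k > 0" "k^2 = M" "k * (b - a) < pi"
    using M by (auto simp: k_def field_simps)
  have "(W has_real_derivative (M - Q x) * u x * sin (k * (x - a))) (at x)"
    if "a \<le> x" "x \<le> b" for x
    unfolding W_def [abs_def] k(2) [symmetric]
    using u[OF that] u'[OF that] by (rule sturm_wronskian_deriv)
  from MVT2[OF ab this] obtain z
    where z: "a < z" "z < b" "W b - W a = (b - a) * ((M - Q z) * u z * sin (k * (z - a)))"
    by blast
  have "k * (z - a) < k * (b - a)" using z k by (intro mult_strict_left_mono) auto
  then have "k * (z - a) < pi" using k(3) by linarith
  moreover have "0 < k * (z - a)" using z k by simp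
  ultimately have "(M - Q z) * u z * sin (k * (z - a)) > 0"
    using QM[of z] pos[of z] z by (simp add: sin_gt_zero)
  then have "W b > 0" using z ab ua by (simp add: W_def)
  moreover have "u' b \<le> 0"
  proof (rule ccontr)
    assume "\<not> u' b \<le> 0"
    then obtain d where d: "d > 0" "\<And>h. h > 0 \<Longrightarrow> h < d \<Longrightarrow> u (b - h) < u b"
      using DERIV_pos_inc_left[OF u[of b]] ab by force
    define h where "h = min (d/2) ((b - a)/2)"
    have "0 < h" "h < d" "a < b - h" using d ab by (auto simp: h_def min_def field_simps)
    then show False using d(2)[of h] pos[of "b - h"] ub by auto
  qed
  moreover have "sin (k * (b - a)) > 0" using k ab by (intro sin_gt_zero) auto
  ultimately show False
    using ub mult_nonpos_nonneg[of "u' b" "sin (k * (b - a))"] by (simp add: W_def)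
qed

lemma sturm_zeros_gap:
  fixes u u' Q :: "real \<Rightarrow> real"
  assumes ab: "a < b" and M: "M > 0"
    and u: "\<And>x. a \<le> x \<Longrightarrow> x \<le> b \<Longrightarrow> (u has_real_derivative u' x) (at x)"
    and u': "\<And>x. a \<le> x \<Longrightarrow> x \<le> b \<Longrightarrow> (u' has_real_derivative - (Q x * u x)) (at x)"
    and ua: "u a = 0" and ub: "u b = 0" and nz: "\<And>x. a < x \<Longrightarrow> x < b \<Longrightarrow> u x \<noteq> 0"
    and QM: "\<And>x. a \<le> x \<Longrightarrow> x \<le> b \<Longrightarrow> Q x < M"
  shows "pi / sqrt M \<le> b - a"
proof -
  have "continuous_on {a<..<b} u"
    using u by (intro DERIV_continuous_on[where D = u']) (auto intro: has_field_derivative_at_within)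
  then consider "\<And>x. a < x \<Longrightarrow> x < b \<Longrightarrow> u x > 0" | "\<And>x. a < x \<Longrightarrow> x < b \<Longrightarrow> - u x > 0"
    using continuous_on_nonzero_sign[of "{a<..<b}" u] nz by fastforce
  then show ?thesis
  proof cases
    case 1
    from sturm_zeros_gap_pos[OF ab M u u' ua ub this QM] show ?thesis .
  next
    case 2
    have "((\<lambda>x. - u x) has_real_derivative - u' x) (at x)"
      and "((\<lambda>x. - u' x) has_real_derivative - (Q x * - u x)) (at x)" if "a \<le> x" "x \<le> b" for x
      using DERIV_minus[OF u[OF that]] DERIV_minus[OF u'[OF that]] by simp_all
    from sturm_zeros_gap_pos[OF ab M this _ _ 2 QM] show ?thesis using ua ub by simp
  qed
qed

lemma sturm_no_positive_solution:
  fixes u u' Q :: "real \<Rightarrow> real"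
  assumes m: "m > 0" and L: "L = pi / sqrt m"
    and u: "\<And>x. A \<le> x \<Longrightarrow> x \<le> A + L \<Longrightarrow> (u has_real_derivative u' x) (at x)"
    and u': "\<And>x. A \<le> x \<Longrightarrow> x \<le> A + L \<Longrightarrow> (u' has_real_derivative - (Q x * u x)) (at x)"
    and Qm: "\<And>x. A \<le> x \<Longrightarrow> x \<le> A + L \<Longrightarrow> m \<le> Q x"
    and pos: "\<And>x. A \<le> x \<Longrightarrow> x \<le> A + L \<Longrightarrow> u x > 0"
  shows False
proof -
  define k where "k = sqrt m"
  define W where "W x = u' x * sin (k * (x - A)) - u x * (k * cos (k * (x - A)))" for x
  \<comment> \<open>\<open>W\<close> decreases on \<open>[A, A + L]\<close>, yet \<open>W A = - k u A < 0 < k u (A + L) = W (A + L)\<close>.\<close>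
  have k: "k > 0" "k^2 = m" "k * L = pi" "L > 0" using m L by (auto simp: k_def)
  have "(W has_real_derivative (m - Q x) * u x * sin (k * (x - A))) (at x)"
    if "A \<le> x" "x \<le> A + L" for x
    unfolding W_def [abs_def] k(2) [symmetric]
    using u[OF that] u'[OF that] by (rule sturm_wronskian_deriv)
  from MVT2[of A "A + L", OF _ this] obtain z
    where z: "A < z" "z < A + L" "W (A + L) - W A = L * ((m - Q z) * u z * sin (k * (z - A)))"
    using k(4) by auto
  have "0 \<le> k * (z - A)" "k * (z - A) \<le> pi"
    using z k mult_left_mono[of "z - A" L k] by auto
  then have "(m - Q z) * u z * sin (k * (z - A)) \<le> 0"
    using Qm[of z] pos[of z] z by (simp add: mult_nonpos_nonneg sin_ge_zero)
  then have "W (A + L) - W A \<le> 0"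
    unfolding z(3) using k(4) by (simp add: mult_nonneg_nonpos)
  moreover have "(u A + u (A + L)) * k > 0" using pos[of A] pos[of "A + L"] k by simp
  ultimately show False using k by (simp add: W_def algebra_simps)
qed

lemma sturm_zero_exists:
  fixes u u' Q :: "real \<Rightarrow> real"
  assumes m: "m > 0" and L: "L = pi / sqrt m"
    and u: "\<And>x. A \<le> x \<Longrightarrow> x \<le> A + L \<Longrightarrow> (u has_real_derivative u' x) (at x)"
    and u': "\<And>x. A \<le> x \<Longrightarrow> x \<le> A + L \<Longrightarrow> (u' has_real_derivative - (Q x * u x)) (at x)"
    and Qm: "\<And>x. A \<le> x \<Longrightarrow> x \<le> A + L \<Longrightarrow> m \<le> Q x"
  shows "\<exists>x. A \<le> x \<and> x \<le> A + L \<and> u x = 0"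
proof (rule ccontr)
  assume "\<nexists>x. A \<le> x \<and> x \<le> A + L \<and> u x = 0"
  moreover have "continuous_on {A..A + L} u"
    using u by (intro DERIV_continuous_on[where D = u']) (auto intro: has_field_derivative_at_within)
  ultimately consider "\<And>x. A \<le> x \<Longrightarrow> x \<le> A + L \<Longrightarrow> u x > 0"
    | "\<And>x. A \<le> x \<Longrightarrow> x \<le> A + L \<Longrightarrow> - u x > 0"
    using continuous_on_nonzero_sign[of "{A..A + L}" u] by fastforce
  then show False
  proof cases
    case 1
    from sturm_no_positive_solution[OF m L u u' Qm this] show False .
  next
    case 2
    have "((\<lambda>x. - u x) has_real_derivative - u' x) (at x)"
      and "((\<lambda>x. - u' x) has_real_derivative - (Q x * - u x)) (at x)"
      if "A \<le> x" "x \<le> A + L" for x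
      using DERIV_minus[OF u[OF that]] DERIV_minus[OF u'[OF that]] by simp_all
    from sturm_no_positive_solution[OF m L this Qm 2] show False .
  qed
qed

section \<open>Increasing enumeration of a discrete set\<close>

definition enum_by_rank :: "'a::linorder set \<Rightarrow> nat \<Rightarrow> 'a" where
  "enum_by_rank S n = (THE x. x \<in> S \<and> card {y\<in>S. y < x} = n)"

locale discrete_unbounded =
  fixes S :: "'a::linorder set"
  assumes finite_le: "\<And>d. finite {x\<in>S. x \<le> d}"
    and unbounded: "\<And>d. \<exists>x\<in>S. d < x"
begin

lemma finite_less: "finite {y\<in>S. y < x}"
  by (rule finite_subset[OF _ finite_le[of x]]) auto

lemma rank_strict_mono:
  assumes "x \<in> S" "x < x'" shows "card {y\<in>S. y < x} < card {y\<in>S. y < x'}"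
  using assms by (intro psubset_card_mono finite_less) auto

lemma rank_exists: "\<exists>x\<in>S. card {y\<in>S. y < x} = n"
proof (induction n)
  case 0
  obtain s where "s \<in> S" using unbounded by blast
  define F where "F = {x\<in>S. x \<le> s}"
  have "finite F" "s \<in> F" using finite_le \<open>s \<in> S\<close> by (auto simp: F_def)
  then have "Min F \<in> F" using Min_in by blast
  then have "Min F \<in> S" "Min F \<le> s" by (simp_all add: F_def)
  moreover have "{y\<in>S. y < Min F} = {}"
    using Min_le[OF \<open>finite F\<close>] \<open>Min F \<le> s\<close> by (force simp: F_def)
  ultimately show ?case by (metis card.empty)
next
  case (Suc n)
  then obtain x where x: "x \<in> S" "card {y\<in>S. y < x} = n" by blast
  obtain s where s: "s \<in> S" "x < s" using unbounded by blast
  define F where "F = {y\<in>S. x < y \<and> y \<le> s}"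
  have "finite F" by (rule finite_subset[OF _ finite_le[of s]]) (auto simp: F_def)
  moreover have "s \<in> F" using s by (simp add: F_def)
  ultimately have "Min F \<in> F" using Min_in by blast
  then have m: "Min F \<in> S" "x < Min F" "Min F \<le> s" by (simp_all add: F_def)
  have "Min F \<le> y" if "y \<in> S" "x < y" for y
    using that Min_le[OF \<open>finite F\<close>, of y] m(3) by (cases "y \<le> s") (auto simp: F_def)
  then have "{y\<in>S. y < Min F} = insert x {y\<in>S. y < x}"
    using x(1) m(2) by (auto simp: not_le[symmetric])
  then have "card {y\<in>S. y < Min F} = Suc n" using x finite_less by simp
  then show ?case using m(1) by blast
qed

lemma rank_inj:
  assumes "x \<in> S" "x' \<in> S" "card {y\<in>S. y < x} = card {y\<in>S. y < x'}" shows "x = x'"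
  using assms rank_strict_mono[of x x'] rank_strict_mono[of x' x]
  by (cases x x' rule: linorder_cases) auto

lemma enum_by_rank:
  "enum_by_rank S n \<in> S" "card {y\<in>S. y < enum_by_rank S n} = n"
proof -
  have "\<exists>!x. x \<in> S \<and> card {y\<in>S. y < x} = n"
    using rank_exists[of n] rank_inj by blast
  from theI'[OF this] show "enum_by_rank S n \<in> S" "card {y\<in>S. y < enum_by_rank S n} = n"
    unfolding enum_by_rank_def by blast+
qed

lemma strict_mono_enum_by_rank: "strict_mono (enum_by_rank S)"
proof (rule strict_monoI, rule ccontr)
  fix m n :: nat assume "m < n" "\<not> enum_by_rank S m < enum_by_rank S n"
  then consider "enum_by_rank S n < enum_by_rank S m" | "enum_by_rank S n = enum_by_rank S m"
    by fastforce
  then show False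
    using rank_strict_mono[OF enum_by_rank(1)] enum_by_rank(2) \<open>m < n\<close>
    by cases (metis not_less_iff_gr_or_eq, metis less_irrefl)
qed

lemma enum_by_rank_surj: "x \<in> S \<Longrightarrow> \<exists>n. x = enum_by_rank S n"
  using rank_inj[OF _ enum_by_rank(1)] enum_by_rank(2) by metis

lemma enum_by_rank_image: "range (enum_by_rank S) = S"
  using enum_by_rank(1) enum_by_rank_surj by blast

lemma enum_by_rank_ge:
  assumes "card {x\<in>S. x < b} \<le> n" shows "b \<le> enum_by_rank S n"
proof (rule ccontr)
  assume "\<not> b \<le> enum_by_rank S n"
  then have "card {y\<in>S. y < enum_by_rank S n} < card {x\<in>S. x < b}"
    using rank_strict_mono enum_by_rank(1) by (simp add: not_le)
  then show False using assms enum_by_rank(2) by simp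
qed

end

section \<open>The positive zeros of \<open>J\<^sub>\<nu>\<close>\<close>

definition besselJ_zeros :: "real \<Rightarrow> real set" where
  "besselJ_zeros \<nu> = {x. 0 < x \<and> besselJ \<nu> x = 0}"

lemma besselJ_zeros_unbounded:
  assumes "\<nu> \<ge> 0" shows "\<exists>x\<in>besselJ_zeros \<nu>. d < x"
proof -
  define A where "A = max d 0 + 2 * \<nu> + 1"
  define L where "L = pi / sqrt (1/2)"
  have A: "d < A" "0 < A" "2 * \<nu> + 1 \<le> A" using assms by (auto simp: A_def)
  have "1/2 \<le> bessel_Q \<nu> x" if "A \<le> x" for x
  proof -
    have "(2 * \<nu> + 1)^2 \<le> x^2" using A that assms by (intro power_mono) auto
    moreover have "2 * (\<nu>^2 - 1/4) \<le> (2 * \<nu> + 1)^2" using assms by (simp add: power2_eq_square algebra_simps)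
    ultimately show ?thesis using A that by (simp add: bessel_Q_def field_simps)
  qed
  then obtain x where x: "A \<le> x" "x \<le> A + L" "bessel_u \<nu> x = 0"
    using sturm_zero_exists[OF _ L_def, of A "bessel_u \<nu>" "bessel_u' \<nu>" "bessel_Q \<nu>"] A(2)
      bessel_u_deriv[OF assms] bessel_u'_deriv[OF assms] by force
  then have "x \<in> besselJ_zeros \<nu>" using A bessel_u_eq_0_iff[OF assms] by (simp add: besselJ_zeros_def)
  then show ?thesis using x(1) A(1) by (intro bexI[of _ x]) auto
qed

lemma discrete_unbounded_besselJ_zeros:
  assumes "\<nu> \<ge> 0" shows "discrete_unbounded (besselJ_zeros \<nu>)"
proof
  show "finite {x \<in> besselJ_zeros \<nu>. x \<le> d}" for d
    by (rule finite_subset[OF _ finite_besselJ_zeros_le[OF assms, of d]]) (auto simp: besselJ_zeros_def)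
  show "\<exists>x\<in>besselJ_zeros \<nu>. d < x" for d by (rule besselJ_zeros_unbounded[OF assms])
qed

lemma bessel_zero_eq_enum_by_rank:
  "bessel_zero \<nu> n = enum_by_rank (besselJ_zeros \<nu>) (n - 1)"
proof -
  have "{y \<in> besselJ_zeros \<nu>. y < x} = {y. 0 < y \<and> y < x \<and> besselJ \<nu> y = 0}" for x
    by (auto simp: besselJ_zeros_def)
  then show ?thesis
    unfolding bessel_zero_def enum_by_rank_def by (simp add: besselJ_zeros_def conj_assoc)
qed

lemma bessel_zero_pos:
  assumes "\<nu> \<ge> 0" shows "0 < bessel_zero \<nu> n"
  using discrete_unbounded.enum_by_rank(1)[OF discrete_unbounded_besselJ_zeros[OF assms]]
  by (simp add: bessel_zero_eq_enum_by_rank besselJ_zeros_def)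

lemma bessel_zero_gap:
  assumes nu: "\<nu> \<ge> 0"
  obtains c where "c > 0" "\<And>n. 1 \<le> n \<Longrightarrow> c \<le> bessel_zero \<nu> (Suc n) - bessel_zero \<nu> n"
proof -
  interpret discrete_unbounded "besselJ_zeros \<nu>" by (rule discrete_unbounded_besselJ_zeros[OF nu])
  define e where "e = enum_by_rank (besselJ_zeros \<nu>)"
  have e_pos: "0 < e n" for n using enum_by_rank(1) by (simp add: e_def besselJ_zeros_def)
  have e_mono: "e n < e m \<longleftrightarrow> n < m" for n m
    using strict_mono_enum_by_rank by (simp add: e_def strict_mono_less)
  define M where "M = 1 + 1 / (e 0)^2"
  have M: "M > 0" by (simp add: M_def add_pos_nonneg)
  have u_zero: "bessel_u \<nu> (e n) = 0" for n
    using enum_by_rank(1) bessel_u_eq_0_iff[OF nu] by (simp add: e_def besselJ_zeros_def)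
  have u_nonzero: "bessel_u \<nu> x \<noteq> 0" if "e n < x" "x < e (Suc n)" for n x
  proof
    assume "bessel_u \<nu> x = 0"
    then have "x \<in> besselJ_zeros \<nu>"
      using that e_pos[of n] bessel_u_eq_0_iff[OF nu] by (simp add: besselJ_zeros_def)
    then obtain m where "x = e m" using enum_by_rank_surj e_def by blast
    then show False using that e_mono by simp
  qed
  have gap: "pi / sqrt M \<le> e (Suc n) - e n" for n
  proof (rule sturm_zeros_gap[OF _ M])
    fix x assume x: "e n \<le> x" "x \<le> e (Suc n)"
    moreover have "e 0 \<le> e n" using e_mono[of 0 n] by (cases n) auto
    ultimately have "0 < x" "e 0 \<le> x" using e_pos[of 0] by linarith+
    then show "(bessel_u \<nu> has_real_derivative bessel_u' \<nu> x) (at x)"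
      and "(bessel_u' \<nu> has_real_derivative - (bessel_Q \<nu> x * bessel_u \<nu> x)) (at x)"
      and "bessel_Q \<nu> x < M"
      using bessel_u_deriv[OF nu] bessel_u'_deriv[OF nu] bessel_Q_less[OF nu e_pos[of 0]]
      by (simp_all add: M_def)
  qed (use e_mono u_zero u_nonzero in simp_all)
  show ?thesis
  proof (rule that)
    show "0 < pi / sqrt M" using M by simp
    fix n :: nat assume "1 \<le> n"
    then have "Suc (n - 1) = n" by simp
    then show "pi / sqrt M \<le> bessel_zero \<nu> (Suc n) - bessel_zero \<nu> n"
      using gap[of "n - 1"] by (simp add: bessel_zero_eq_enum_by_rank e_def)
  qed
qed

section \<open>Admissible enumerations\<close>

definition admissible_enumeration :: "(nat \<Rightarrow> complex) \<Rightarrow> complex set \<Rightarrow> bool" where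
  "admissible_enumeration \<Lambda> S \<longleftrightarrow>
     bij_betw \<Lambda> {1..} S \<and>
     (\<exists>\<delta>>0. \<exists>\<rho>>0.
        (\<forall>n\<ge>1. Re (\<Lambda> n) \<ge> \<delta> * cmod (\<Lambda> n)) \<and>
        (\<forall>n\<ge>1. \<forall>m\<ge>1. cmod (\<Lambda> n - \<Lambda> m) \<ge> \<rho> * \<bar>real n - real m\<bar>)) \<and>
     summable (\<lambda>n. 1 / cmod (\<Lambda> (n + 1)))"

lemma admissible_enumerationI:
  assumes "bij_betw \<Lambda> {1..} S" "\<delta> > 0" "\<rho> > 0" "C > 0"
    and "\<And>n. 1 \<le> n \<Longrightarrow> \<delta> * cmod (\<Lambda> n) \<le> Re (\<Lambda> n)"
    and "\<And>n m. 1 \<le> n \<Longrightarrow> 1 \<le> m \<Longrightarrow> \<rho> * \<bar>real n - real m\<bar> \<le> cmod (\<Lambda> n - \<Lambda> m)"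
    and growth: "\<And>n. C * (real n + 1)^2 \<le> cmod (\<Lambda> (n + 1))"
  shows "admissible_enumeration \<Lambda> S"
  unfolding admissible_enumeration_def
proof (intro conjI)
  show "bij_betw \<Lambda> {1..} S" by fact
  show "\<exists>\<delta>>0. \<exists>\<rho>>0. (\<forall>n\<ge>1. Re (\<Lambda> n) \<ge> \<delta> * cmod (\<Lambda> n)) \<and>
      (\<forall>n\<ge>1. \<forall>m\<ge>1. cmod (\<Lambda> n - \<Lambda> m) \<ge> \<rho> * \<bar>real n - real m\<bar>)"
    using assms(2,3,5,6) by blast
  have "summable (\<lambda>n. inverse (real n ^ 2))" by (rule inverse_power_summable) simp
  then have "summable (\<lambda>n. inverse C * inverse (real (Suc n) ^ 2))"
    by (intro summable_mult) (subst summable_Suc_iff)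
  then have "summable (\<lambda>n. 1 / (C * (real n + 1) ^ 2))" by (simp add: field_simps)
  then show "summable (\<lambda>n. 1 / cmod (\<Lambda> (n + 1)))"
  proof (rule summable_comparison_test')
    fix n
    have "0 < C * (real n + 1)^2" using \<open>C > 0\<close> by simp
    then show "norm (1 / cmod (\<Lambda> (n + 1))) \<le> 1 / (C * (real n + 1)^2)"
      using growth[of n] by (simp add: frac_le)
  qed
qed

lemma gaps_sum_lower:
  fixes f :: "nat \<Rightarrow> real"
  assumes gap: "\<And>i. k \<le> i \<Longrightarrow> c \<le> f (Suc i) - f i" and "k \<le> n" "n \<le> m"
  shows "c * (real m - real n) \<le> f m - f n"
  using \<open>n \<le> m\<close>
proof (induction m rule: dec_induct)
  case (step m)
  then show ?case using gap[of m] \<open>k \<le> n\<close> by (simp add: algebra_simps)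
qed simp

lemma gaps_separated:
  fixes f :: "nat \<Rightarrow> real"
  assumes "\<And>i. k \<le> i \<Longrightarrow> c \<le> f (Suc i) - f i" and "k \<le> n" "k \<le> m"
  shows "c * \<bar>real n - real m\<bar> \<le> \<bar>f n - f m\<bar>"
  using gaps_sum_lower[where k = k and c = c and f = f and n = n and m = m, OF assms(1)]
    gaps_sum_lower[where k = k and c = c and f = f and n = m and m = n, OF assms(1)] assms(2,3)
  by (cases "n \<le> m") (auto simp: abs_if algebra_simps)

lemma admissible_enumeration_real:
  fixes T :: "real set"
  assumes "discrete_unbounded T" "\<rho> > 0" "C > 0"
    and sep: "\<And>x y. x \<in> T \<Longrightarrow> y \<in> T \<Longrightarrow> x \<noteq> y \<Longrightarrow> \<rho> \<le> \<bar>x - y\<bar>"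
    and growth: "\<And>n. C * (real n + 1)^2 \<le> enum_by_rank T n"
  shows "admissible_enumeration (\<lambda>n. of_real (enum_by_rank T (n - 1))) (of_real ` T)"
proof -
  interpret discrete_unbounded T by fact
  define e where "e = enum_by_rank T"
  have e_pos: "0 < e n" for n
  proof -
    have "0 < C * (real n + 1)^2" using \<open>C > 0\<close> by simp
    then show ?thesis using growth[of n] unfolding e_def by linarith
  qed
  have e_gap: "\<rho> \<le> e (Suc n) - e n" for n
  proof -
    have "e n < e (Suc n)" using strict_mono_enum_by_rank by (simp add: e_def strict_mono_def)
    then show ?thesis using sep[OF enum_by_rank(1) enum_by_rank(1), of "Suc n" n] by (simp add: e_def)
  qed
  have "bij_betw (\<lambda>n. e (n - 1)) {1..} T"
  proof (rule bij_betw_imageI)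
    show "inj_on (\<lambda>n. e (n - 1)) {1..}"
      using strict_mono_eq[OF strict_mono_enum_by_rank] by (auto simp: inj_on_def e_def)
    have "(\<lambda>n. e (n - 1)) ` {1..} = range e"
      by (force intro: image_eqI[of _ _ "Suc _"])
    then show "(\<lambda>n. e (n - 1)) ` {1..} = T" using enum_by_rank_image by (simp add: e_def)
  qed
  then have "bij_betw (\<lambda>n. of_real (e (n - 1)) :: complex) {1..} (of_real ` T)"
    by (rule bij_betw_trans[of _ _ T, unfolded o_def]) (simp add: bij_betw_def inj_on_def)
  then show ?thesis unfolding e_def [symmetric]
  proof (rule admissible_enumerationI[of _ _ 1 \<rho> C])
    fix n m :: nat assume "1 \<le> n" "1 \<le> m"
    then show "\<rho> * \<bar>real n - real m\<bar> \<le> cmod (of_real (e (n - 1)) - of_real (e (m - 1)))"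
      using gaps_separated[of 0 \<rho> e "n - 1" "m - 1"] e_gap
      by (simp add: of_real_diff [symmetric] of_nat_diff del: of_real_diff)
  qed (use e_pos e_pos[THEN less_imp_le] growth \<open>\<rho> > 0\<close> \<open>C > 0\<close> in \<open>simp_all add: e_def\<close>)
qed

section \<open>Sequences with linearly growing gaps and their shifts\<close>

locale linearly_growing_gaps =
  fixes L :: "nat \<Rightarrow> real" and c :: real
  assumes L_1_pos: "0 < L 1" and c_pos: "0 < c"
    and L_gap: "\<And>n. 1 \<le> n \<Longrightarrow> c * real n \<le> L (Suc n) - L n"
begin

lemma L_gap_ge_c:
  assumes "1 \<le> n" shows "c \<le> L (Suc n) - L n"
proof -
  have "c * 1 \<le> c * real n" using assms c_pos by (intro mult_left_mono) auto
  then show ?thesis using L_gap[OF assms] by linarith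
qed

lemma L_diff: "1 \<le> n \<Longrightarrow> n \<le> m \<Longrightarrow> c * (real m - real n) \<le> L m - L n"
  by (rule gaps_sum_lower[where k = 1 and c = c and f = L, OF L_gap_ge_c])

lemma L_mono:
  assumes "1 \<le> n" "n \<le> m" shows "L n \<le> L m"
proof -
  have "0 \<le> c * (real m - real n)" using assms c_pos by simp
  then show ?thesis using L_diff[OF assms] by linarith
qed

lemma L_strict_mono:
  assumes "1 \<le> n" "n < m" shows "L n < L m"
proof -
  have "0 < c * (real m - real n)" using assms c_pos by simp
  then show ?thesis using L_diff[of n m] assms by linarith
qed

lemma L_separated: "1 \<le> n \<Longrightarrow> 1 \<le> m \<Longrightarrow> c * \<bar>real n - real m\<bar> \<le> \<bar>L n - L m\<bar>"
  by (rule gaps_separated[where k = 1 and c = c and f = L, OF L_gap_ge_c])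

lemma L_inj: "1 \<le> n \<Longrightarrow> 1 \<le> m \<Longrightarrow> L n = L m \<Longrightarrow> n = m"
  using L_strict_mono[of n m] L_strict_mono[of m n] by (cases n m rule: linorder_cases) auto

lemma L_gt_linear: "1 \<le> n \<Longrightarrow> c * (real n - 1) < L n"
  using L_diff[of 1 n] L_1_pos by simp

lemma finite_L_le: "finite {n. 1 \<le> n \<and> L n \<le> d}"
proof (rule finite_subset)
  show "{n. 1 \<le> n \<and> L n \<le> d} \<subseteq> {..nat \<lceil>d / c\<rceil> + 1}"
  proof safe
    fix n assume "1 \<le> n" "L n \<le> d"
    then have "real n - 1 < d / c" using L_gt_linear[of n] c_pos by (simp add: field_simps)
    then show "n \<le> nat \<lceil>d / c\<rceil> + 1" by linarith
  qed
qed simp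

lemma L_unbounded: "\<exists>n\<ge>1. d < L n"
proof -
  obtain n :: nat where n: "max 1 (d / c + 1) < real n" using reals_Archimedean2 by blast
  then have "1 \<le> n" by simp
  moreover have "d < c * (real n - 1)" using n c_pos by (simp add: field_simps)
  ultimately show ?thesis using L_gt_linear by (meson less_trans)
qed

lemma L_quadratic:
  obtains C where "C > 0" "\<And>k n. 1 \<le> k \<Longrightarrow> n + 1 \<le> 2 * k \<Longrightarrow> C * (real n + 1)^2 \<le> L k"
proof -
  define C where "C = min (L 1) (c / 3)"
  have C: "C > 0" using L_1_pos c_pos by (simp add: C_def)
  have sq: "C * (real k)^2 \<le> L k" if "1 \<le> k" for k
    using that
  proof (induction k rule: dec_induct)
    case (step k)
    have "C * (real (Suc k))^2 = C * (real k)^2 + C * (2 * real k + 1)"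
      by (simp add: power2_eq_square algebra_simps)
    also have "C * (2 * real k + 1) \<le> c / 3 * (2 * real k + 1)"
      by (intro mult_right_mono) (auto simp: C_def)
    also have "\<dots> \<le> c * real k" using c_pos step(1) by (simp add: field_simps)
    finally show ?case using step(3) L_gap[OF step(1)] by simp
  qed (simp add: C_def)
  show ?thesis
  proof (rule that[of "C / 4"])
    fix k n :: nat assume "1 \<le> k" "n + 1 \<le> 2 * k"
    then have "(real n + 1)^2 \<le> (2 * real k)^2" by (intro power_mono) linarith+
    then have "C / 4 * (real n + 1)^2 \<le> C * (real k)^2" using C by (simp add: power_mult_distrib)
    then show "C / 4 * (real n + 1)^2 \<le> L k" using sq[OF \<open>1 \<le> k\<close>] by linarith
  qed (use C in simp)
qed

lemma L_shift_gap:
  fixes \<sigma> :: real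
  obtains m where "m > 0"
    "\<And>k j. 1 \<le> k \<Longrightarrow> 1 \<le> j \<Longrightarrow> L k + \<sigma> \<noteq> L j \<Longrightarrow> m \<le> \<bar>L k + \<sigma> - L j\<bar>"
proof -
  obtain N :: nat where N: "max 1 ((\<bar>\<sigma>\<bar> + 1) / c + 1) < real N" using reals_Archimedean2 by blast
  then have "1 \<le> N" by simp
  have big: "\<bar>\<sigma>\<bar> + 1 \<le> L i - L i'" if "N < i" "1 \<le> i'" "i' < i" for i i'
  proof -
    have "\<bar>\<sigma>\<bar> + 1 + c < c * real N" using N c_pos by (simp add: field_simps)
    moreover have "c * real N \<le> c * real i" using that(1) c_pos by simp
    moreover have "c * real (i - 1) = c * real i - c" using that(1) by (simp add: of_nat_diff algebra_simps)
    ultimately have "\<bar>\<sigma>\<bar> + 1 \<le> c * real (i - 1)" by linarith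
    moreover have "c * real (i - 1) \<le> L i - L (i - 1)" using L_gap[of "i - 1"] that by simp
    moreover have "L i' \<le> L (i - 1)" using that by (intro L_mono) auto
    ultimately show ?thesis by linarith
  qed
  define F where "F = (\<lambda>(k, j). \<bar>L k + \<sigma> - L j\<bar>) ` {(k, j) \<in> {1..N} \<times> {1..N}. L k + \<sigma> \<noteq> L j}"
  have "finite F"
    unfolding F_def by (rule finite_imageI, rule finite_subset[of _ "{1..N} \<times> {1..N}"]) auto
  show ?thesis
  proof (rule that[of "Min (insert 1 F)"])
    show "0 < Min (insert 1 F)" using \<open>finite F\<close> by (auto simp: F_def)
    fix k j :: nat assume kj: "1 \<le> k" "1 \<le> j" "L k + \<sigma> \<noteq> L j"
    consider "k \<le> N" "j \<le> N" | "k = j" | "N < k" "j < k" | "N < j" "k < j" by linarith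
    then show "Min (insert 1 F) \<le> \<bar>L k + \<sigma> - L j\<bar>"
    proof cases
      case 1
      then have "\<bar>L k + \<sigma> - L j\<bar> \<in> F" using kj by (force simp: F_def)
      then show ?thesis using \<open>finite F\<close> by simp
    next
      case 2
      then have "\<bar>L 1 + \<sigma> - L 1\<bar> \<in> F" using kj \<open>1 \<le> N\<close> by (force simp: F_def)
      then show ?thesis using \<open>finite F\<close> 2 by simp
    next
      case 3
      then have "1 \<le> \<bar>L k + \<sigma> - L j\<bar>" using big[of k j] kj by linarith
      then show ?thesis using \<open>finite F\<close> by (meson Min_le finite_insert insertI1 order_trans)
    next
      case 4
      then have "1 \<le> \<bar>L k + \<sigma> - L j\<bar>" using big[of j k] kj by linarith
      then show ?thesis using \<open>finite F\<close> by (meson Min_le finite_insert insertI1 order_trans)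
    qed
  qed
qed

definition shifted_values :: "real \<Rightarrow> real set" where
  "shifted_values \<sigma> = {L n + s | n s. 1 \<le> n \<and> s \<in> {0, \<sigma>}}"

lemma discrete_unbounded_shifted_values:
  assumes "0 \<le> \<sigma>" shows "discrete_unbounded (shifted_values \<sigma>)"
proof
  show "finite {x \<in> shifted_values \<sigma>. x \<le> d}" for d
  proof (rule finite_subset)
    show "{x \<in> shifted_values \<sigma>. x \<le> d} \<subseteq> (\<lambda>(n, s). L n + s) ` ({n. 1 \<le> n \<and> L n \<le> d} \<times> {0, \<sigma>})"
      using assms by (force simp: shifted_values_def)
  qed (intro finite_imageI finite_cartesian_product finite_L_le finite.intros)
  show "\<exists>x\<in>shifted_values \<sigma>. d < x" for d
    using L_unbounded[of d] by (force simp: shifted_values_def)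
qed

lemma shifted_values_separated:
  obtains \<rho> where "\<rho> > 0"
    "\<And>x y. x \<in> shifted_values \<sigma> \<Longrightarrow> y \<in> shifted_values \<sigma> \<Longrightarrow> x \<noteq> y \<Longrightarrow> \<rho> \<le> \<bar>x - y\<bar>"
proof -
  obtain m where m: "m > 0"
    "\<And>k j. 1 \<le> k \<Longrightarrow> 1 \<le> j \<Longrightarrow> L k + \<sigma> \<noteq> L j \<Longrightarrow> m \<le> \<bar>L k + \<sigma> - L j\<bar>"
    using L_shift_gap by blast
  have "min c m \<le> \<bar>x - y\<bar>"
    if xy: "x \<in> shifted_values \<sigma>" "y \<in> shifted_values \<sigma>" "x \<noteq> y" for x y
  proof -
    obtain k s j t where x: "x = L k + s" "1 \<le> k" "s \<in> {0, \<sigma>}"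
      and y: "y = L j + t" "1 \<le> j" "t \<in> {0, \<sigma>}"
      using xy(1,2) by (auto simp: shifted_values_def)
    show ?thesis
    proof (cases "s = t")
      case True
      then have "k \<noteq> j" using x y xy(3) by auto
      then have "c * 1 \<le> c * \<bar>real k - real j\<bar>" using c_pos by (intro mult_left_mono) auto
      moreover have "x - y = L k - L j" using x y True by simp
      ultimately have "c \<le> \<bar>x - y\<bar>" using L_separated[OF x(2) y(2)] by linarith
      then show ?thesis by linarith
    next
      case False
      then consider "x - y = L k + \<sigma> - L j" | "y - x = L j + \<sigma> - L k" using x y by auto
      then have "m \<le> \<bar>x - y\<bar>"
        by cases (use m(2)[of k j] m(2)[of j k] x(2) y(2) xy(3) in \<open>auto simp: abs_minus_commute\<close>)
      then show ?thesis by linarith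
    qed
  qed
  then show ?thesis using that[of "min c m"] m(1) c_pos by simp
qed

lemma enum_shifted_values_ge:
  assumes "0 \<le> \<sigma>" shows "L (n div 2 + 1) \<le> enum_by_rank (shifted_values \<sigma>) n"
proof (rule discrete_unbounded.enum_by_rank_ge[OF discrete_unbounded_shifted_values[OF assms]])
  define k where "k = n div 2 + 1"
  have "{x \<in> shifted_values \<sigma>. x < L k} \<subseteq> (\<lambda>(n, s). L n + s) ` ({1..<k} \<times> {0, \<sigma>})"
  proof
    fix x assume "x \<in> {x \<in> shifted_values \<sigma>. x < L k}"
    then obtain n s where ns: "x = L n + s" "1 \<le> n" "s \<in> {0, \<sigma>}" "x < L k"
      by (auto simp: shifted_values_def)
    then have "L n < L k" using assms by auto
    then have "\<not> k \<le> n" using L_mono[of k n] by (auto simp: k_def)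
    then show "x \<in> (\<lambda>(n, s). L n + s) ` ({1..<k} \<times> {0, \<sigma>})" using ns by force
  qed
  then have "card {x \<in> shifted_values \<sigma>. x < L k} \<le> card ({1..<k} \<times> {0, \<sigma>})"
    by (meson card_image_le card_mono finite_SigmaI finite_atLeastLessThan finite_imageI
        finite.intros le_trans)
  also have "\<dots> \<le> 2 * (k - 1)" by (simp add: card_cartesian_product card_insert_if)
  also have "\<dots> \<le> n" by (simp add: k_def)
  finally show "card {x \<in> shifted_values \<sigma>. x < L (n div 2 + 1)} \<le> n" by (simp add: k_def)
qed

lemma admissible_real_shift:
  assumes "0 \<le> \<sigma>"
  shows "\<exists>\<Lambda>. admissible_enumeration \<Lambda>
           ({complex_of_real (L n) + complex_of_real \<sigma> | n. n \<ge> 1} \<union> {complex_of_real (L n) | n. n \<ge> 1})"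
proof -
  have "{complex_of_real (L n) + complex_of_real \<sigma> | n. n \<ge> 1} \<union> {complex_of_real (L n) | n. n \<ge> 1}
      = of_real ` shifted_values \<sigma>"
  proof (intro equalityI subsetI)
    fix z
    assume "z \<in> {complex_of_real (L n) + complex_of_real \<sigma> | n. n \<ge> 1} \<union> {complex_of_real (L n) | n. n \<ge> 1}"
    then consider n where "1 \<le> n" "z = of_real (L n + \<sigma>)" | n where "1 \<le> n" "z = of_real (L n + 0)"
      by auto
    then show "z \<in> of_real ` shifted_values \<sigma>" unfolding shifted_values_def by cases blast+
  qed (auto simp: shifted_values_def)
  moreover obtain \<rho> where "\<rho> > 0"
    "\<And>x y. x \<in> shifted_values \<sigma> \<Longrightarrow> y \<in> shifted_values \<sigma> \<Longrightarrow> x \<noteq> y \<Longrightarrow> \<rho> \<le> \<bar>x - y\<bar>"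
    using shifted_values_separated by blast
  moreover obtain C where C: "C > 0" "\<And>k n. 1 \<le> k \<Longrightarrow> n + 1 \<le> 2 * k \<Longrightarrow> C * (real n + 1)^2 \<le> L k"
    using L_quadratic by blast
  moreover have "C * (real n + 1)^2 \<le> enum_by_rank (shifted_values \<sigma>) n" for n
  proof -
    have "C * (real n + 1)^2 \<le> L (n div 2 + 1)" by (rule C(2)) presburger+
    then show ?thesis using enum_shifted_values_ge[OF assms, of n] by linarith
  qed
  ultimately show ?thesis
    using admissible_enumeration_real[OF discrete_unbounded_shifted_values[OF assms]] by metis
qed

text \<open>The values \<open>L k\<close> and \<open>L k + s\<close> sit at the indices \<open>2 k - 1\<close> and \<open>2 k\<close>.\<close>

definition interleaved :: "complex \<Rightarrow> nat \<Rightarrow> complex" where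
  "interleaved s n = of_real (L ((n + 1) div 2)) + (if even n then s else 0)"

lemma interleaved_index:
  assumes "1 \<le> n"
  shows "1 \<le> (n + 1) div 2" "real n \<le> 2 * real ((n + 1) div 2)" "2 * real ((n + 1) div 2) \<le> real n + 1"
  using assms by linarith+

lemma Re_interleaved: "Re (interleaved (Complex 0 r) n) = L ((n + 1) div 2)"
  and Im_interleaved: "Im (interleaved (Complex 0 r) n) = (if even n then r else 0)"
  by (simp_all add: interleaved_def)

lemma bij_betw_interleaved:
  assumes "r \<noteq> 0"
  shows "bij_betw (interleaved (Complex 0 r)) {1..}
           ({complex_of_real (L n) + Complex 0 r | n. n \<ge> 1} \<union> {complex_of_real (L n) | n. n \<ge> 1})"
proof (rule bij_betw_imageI)
  show "inj_on (interleaved (Complex 0 r)) {1..}"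
  proof (rule inj_onI)
    fix a b :: nat assume ab: "a \<in> {1..}" "b \<in> {1..}" "interleaved (Complex 0 r) a = interleaved (Complex 0 r) b"
    have "(if even a then r else 0) = (if even b then r else 0)"
      using arg_cong[OF ab(3), of Im] by (simp only: Im_interleaved)
    then have "even a \<longleftrightarrow> even b" using assms by (auto split: if_splits)
    moreover have "L ((a + 1) div 2) = L ((b + 1) div 2)"
      using arg_cong[OF ab(3), of Re] by (simp only: Re_interleaved)
    then have "(a + 1) div 2 = (b + 1) div 2" using ab(1,2) interleaved_index(1) L_inj by simp
    ultimately show "a = b" by presburger
  qed
  show "interleaved (Complex 0 r) ` {1..}
      = {complex_of_real (L n) + Complex 0 r | n. n \<ge> 1} \<union> {complex_of_real (L n) | n. n \<ge> 1}"
  proof (intro equalityI subsetI)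
    fix x assume "x \<in> interleaved (Complex 0 r) ` {1..}"
    then obtain n where "1 \<le> n" "x = interleaved (Complex 0 r) n" by auto
    then show "x \<in> {complex_of_real (L n) + Complex 0 r | n. n \<ge> 1} \<union> {complex_of_real (L n) | n. n \<ge> 1}"
      using interleaved_index(1)[of n] by (auto simp: interleaved_def)
  next
    fix x assume "x \<in> {complex_of_real (L n) + Complex 0 r | n. n \<ge> 1} \<union> {complex_of_real (L n) | n. n \<ge> 1}"
    then consider j where "1 \<le> j" "x = interleaved (Complex 0 r) (2 * j)"
      | j where "1 \<le> j" "x = interleaved (Complex 0 r) (2 * j - 1)"
      by (auto simp: interleaved_def)
    then show "x \<in> interleaved (Complex 0 r) ` {1..}"
      by cases (auto intro!: image_eqI)
  qed
qed

lemma interleaved_separated: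
  assumes "1 \<le> n" "1 \<le> m"
  shows "min (c / 3) \<bar>r\<bar> * \<bar>real n - real m\<bar>
           \<le> cmod (interleaved (Complex 0 r) n - interleaved (Complex 0 r) m)"
proof -
  define k where "k n = (n + 1) div 2" for n :: nat
  note idx = interleaved_index[OF assms(1), folded k_def] interleaved_index[OF assms(2), folded k_def]
  show ?thesis
  proof (cases "k n = k m")
    case True
    show ?thesis
    proof (cases "n = m")
      case False
      with True have "n = m + 1 \<or> m = n + 1" unfolding k_def by presburger
      then have "\<bar>real n - real m\<bar> = 1" "even n \<longleftrightarrow> odd m" by auto
      then have "\<bar>r\<bar> = \<bar>Im (interleaved (Complex 0 r) n - interleaved (Complex 0 r) m)\<bar>"
        by (auto simp: Im_interleaved)
      also have "\<dots> \<le> cmod (interleaved (Complex 0 r) n - interleaved (Complex 0 r) m)"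
        by (rule abs_Im_le_cmod)
      finally show ?thesis using \<open>\<bar>real n - real m\<bar> = 1\<close> by (simp add: min_le_iff_disj)
    qed simp
  next
    case False
    then have "1 \<le> \<bar>real (k n) - real (k m)\<bar>" by linarith
    then have "\<bar>real n - real m\<bar> \<le> 3 * \<bar>real (k n) - real (k m)\<bar>"
      using idx by (auto simp: abs_if split: if_splits)
    then have "min (c / 3) \<bar>r\<bar> * \<bar>real n - real m\<bar> \<le> c / 3 * (3 * \<bar>real (k n) - real (k m)\<bar>)"
      using c_pos by (intro mult_mono) auto
    also have "\<dots> \<le> \<bar>L (k n) - L (k m)\<bar>" using L_separated idx by simp
    also have "\<dots> = \<bar>Re (interleaved (Complex 0 r) n - interleaved (Complex 0 r) m)\<bar>"
      by (simp add: Re_interleaved k_def)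
    also have "\<dots> \<le> cmod (interleaved (Complex 0 r) n - interleaved (Complex 0 r) m)"
      by (rule abs_Re_le_cmod)
    finally show ?thesis .
  qed
qed

lemma admissible_imaginary_shift:
  assumes "r \<noteq> 0"
  shows "\<exists>\<Lambda>. admissible_enumeration \<Lambda>
           ({complex_of_real (L n) + Complex 0 r | n. n \<ge> 1} \<union> {complex_of_real (L n) | n. n \<ge> 1})"
proof -
  obtain C where C: "C > 0" "\<And>k n. 1 \<le> k \<Longrightarrow> n + 1 \<le> 2 * k \<Longrightarrow> C * (real n + 1)^2 \<le> L k"
    using L_quadratic by blast
  have sector: "L 1 / (L 1 + \<bar>r\<bar>) * cmod (interleaved (Complex 0 r) n) \<le> Re (interleaved (Complex 0 r) n)"
    if "1 \<le> n" for n
  proof -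
    define x where "x = L ((n + 1) div 2)"
    have x: "L 1 \<le> x" using L_mono interleaved_index(1)[OF that] by (simp add: x_def)
    have "cmod (interleaved (Complex 0 r) n) \<le> x + \<bar>r\<bar>"
      using norm_triangle_ineq[of "of_real x" "if even n then Complex 0 r else 0"] x L_1_pos
      by (simp add: interleaved_def x_def cmod_def split: if_splits)
    then have "L 1 / (L 1 + \<bar>r\<bar>) * cmod (interleaved (Complex 0 r) n) \<le> L 1 / (L 1 + \<bar>r\<bar>) * (x + \<bar>r\<bar>)"
      using L_1_pos by (intro mult_left_mono) auto
    also have "\<dots> \<le> x"
      using L_1_pos mult_left_mono[OF x, of "\<bar>r\<bar>"] by (simp add: field_simps mult.commute)
    finally show ?thesis by (simp add: Re_interleaved x_def)
  qed
  have "C * (real n + 1)^2 \<le> cmod (interleaved (Complex 0 r) (n + 1))" for n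
  proof -
    have "C * (real n + 1)^2 \<le> L ((n + 2) div 2)" by (rule C(2)) presburger+
    also have "\<dots> \<le> cmod (interleaved (Complex 0 r) (n + 1))"
      using complex_Re_le_cmod[of "interleaved (Complex 0 r) (n + 1)"] by (simp add: Re_interleaved)
    finally show ?thesis .
  qed
  then show ?thesis
    using admissible_enumerationI[OF bij_betw_interleaved[OF assms] _ _ C(1) sector interleaved_separated]
      L_1_pos c_pos assms by fastforce
qed

end

section \<open>The spectrum of the coupled system\<close>

lemma linearly_growing_gaps_scaled_square:
  fixes z :: "nat \<Rightarrow> real"
  assumes K: "K > 0" and d: "d > 0" and z1: "0 < z 1"
    and gap: "\<And>n. 1 \<le> n \<Longrightarrow> d \<le> z (Suc n) - z n"
  shows "linearly_growing_gaps (\<lambda>n. K * (z n)^2) (K * d * min d (z 1))"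
proof
  define d' where "d' = min d (z 1)"
  have d': "0 < d'" "d' \<le> d" "d' \<le> z 1" using d z1 by (auto simp: d'_def)
  show "0 < K * (z 1)^2" using K z1 by simp
  show "0 < K * d * min d (z 1)" using K d' by (simp add: d'_def)
  fix n :: nat assume n: "1 \<le> n"
  have "d * (real n - 1) \<le> z n - z 1"
    using gaps_sum_lower[where k = 1 and c = d and f = z and n = 1 and m = n, OF gap] n by simp
  moreover have "d' * (real n - 1) \<le> d * (real n - 1)" using d' n by (intro mult_right_mono) auto
  ultimately have zn: "d' * real n \<le> z n" using d' by (simp add: algebra_simps)
  have "0 \<le> d' * real n" using d' by simp
  then have "d' * real n \<le> z (Suc n) + z n" using zn gap[OF n] d by linarith
  then have "d * (d' * real n) \<le> (z (Suc n) - z n) * (z (Suc n) + z n)"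
    using gap[OF n] d \<open>0 \<le> d' * real n\<close> by (intro mult_mono) auto
  then have "K * (d * (d' * real n)) \<le> K * ((z (Suc n) - z n) * (z (Suc n) + z n))"
    using K by simp
  then show "K * d * min d (z 1) * real n \<le> K * (z (Suc n))^2 - K * (z n)^2"
    by (simp add: d'_def power2_eq_square algebra_simps)
qed

lemma eig2_minus_eig1_cases:
  "(\<exists>\<sigma>\<ge>0. eig2 a1 a2 - eig1 a1 a2 = complex_of_real \<sigma>)
   \<or> (\<exists>r. r \<noteq> 0 \<and> eig2 a1 a2 - eig1 a1 a2 = Complex 0 r)"
proof -
  consider "a2^2 + 4 * a1 > 0" | "a2^2 + 4 * a1 = 0" | "a2^2 + 4 * a1 < 0" by linarith
  then show ?thesis
  proof cases
    case 1
    then have "eig2 a1 a2 - eig1 a1 a2 = complex_of_real (sqrt (a2^2 + 4 * a1))"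
      by (simp add: eig1_def eig2_def field_simps)
    then show ?thesis using 1 by auto
  next
    case 2
    then show ?thesis by (simp add: eig1_def eig2_def)
  next
    case 3
    then have "eig2 a1 a2 - eig1 a1 a2 = Complex 0 (- sqrt (- (a2^2 + 4 * a1)))"
      by (simp add: eig1_def eig2_def complex_eq_iff)
    then show ?thesis using 3 by auto
  qed
qed

theorem proposition4p1:
  fixes \<alpha> \<mu> a1 a2 :: real
  assumes "0 \<le> \<alpha>" and "\<alpha> < 1" and "\<mu> \<le> mu_crit \<alpha>"
    and "\<forall>n l. 1 \<le> n \<longrightarrow> 1 \<le> l \<longrightarrow> n \<noteq> l \<longrightarrow>
           complex_of_real (lam \<alpha> \<mu> n - lam \<alpha> \<mu> l) \<noteq> eig1 a1 a2 - eig2 a1 a2"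
  shows "\<exists>\<Lambda> :: nat \<Rightarrow> complex.
           bij_betw \<Lambda> {1..} (Lambda_set \<alpha> \<mu> a1 a2) \<and>
           (\<exists>\<delta>>0. \<exists>\<rho>>0.
              (\<forall>n\<ge>1. Re (\<Lambda> n) \<ge> \<delta> * cmod (\<Lambda> n)) \<and>
              (\<forall>n\<ge>1. \<forall>m\<ge>1. cmod (\<Lambda> n - \<Lambda> m) \<ge> \<rho> * \<bar>real n - real m\<bar>)) \<and>
           summable (\<lambda>n. 1 / cmod (\<Lambda> (n + 1)))"
proof -
  define \<nu> where "\<nu> = nu_am \<alpha> \<mu>"
  have \<nu>: "\<nu> \<ge> 0" using assms(1-3) by (simp add: \<nu>_def nu_am_def)
  obtain d where d: "d > 0" "\<And>n. 1 \<le> n \<Longrightarrow> d \<le> bessel_zero \<nu> (Suc n) - bessel_zero \<nu> n"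
    using bessel_zero_gap[OF \<nu>] by blast
  have "linearly_growing_gaps (\<lambda>n. ((2 - \<alpha>) / 2)^2 * (bessel_zero \<nu> n)^2)
          (((2 - \<alpha>) / 2)^2 * d * min d (bessel_zero \<nu> 1))"
    using assms(2) by (intro linearly_growing_gaps_scaled_square d bessel_zero_pos[OF \<nu>]) auto
  then interpret linearly_growing_gaps "lam \<alpha> \<mu>" "((2 - \<alpha>) / 2)^2 * d * min d (bessel_zero \<nu> 1)"
    by (simp add: lam_def [abs_def] \<nu>_def)
  have "Lambda_set \<alpha> \<mu> a1 a2 = {complex_of_real (lam \<alpha> \<mu> n) + (eig2 a1 a2 - eig1 a1 a2) | n. n \<ge> 1}
      \<union> {complex_of_real (lam \<alpha> \<mu> n) | n. n \<ge> 1}"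
    by (simp add: Lambda_set_def add_diff_eq)
  then have "\<exists>\<Lambda>. admissible_enumeration \<Lambda> (Lambda_set \<alpha> \<mu> a1 a2)"
    using eig2_minus_eig1_cases[of a1 a2] admissible_real_shift admissible_imaginary_shift by auto
  then show ?thesis unfolding admissible_enumeration_def .
qed

end
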